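(* Let $L>0$ and $f\in C^1_{\mathrm{pw}}[-L,L]$ with break points $-L=z_0<z_1<\dots<z_N=L$, so that $f\in C^1[z_{j-1},z_j]$ and on each $\tau_j=(z_{j-1},z_j)$ either $f'\le0$ throughout or $f'>0$ throughout. Suppose $f(x)\ge f_{\min}>0$ for all $x\in[-L,L]$. Then $$\prod_{\ell=1}^{N-1}\max\Big\{\frac{f^+(z_\ell)}{f^-(z_\ell)},1\Big\}\le\exp\Big(\frac{1}{f_{\min}}\mathrm{Var}(f)\Big)\quad\text{and}\quad\prod_{\ell=1}^{N-1}\max\Big\{\frac{f^-(z_\ell)}{f^+(z_\ell)},1\Big\}\le\exp\Big(\frac{1}{f_{\min}}\mathrm{Var}(f)\Big).$$
   Context: $C^1_{\mathrm{pw}}[-L,L]$ is the set of $g:[-L,L]\to\mathbb{R}$ for which there is a finite partition $-L=z_0<\dots<z_N=L$ with $g\in C^1[z_{j-1},z_j]$ for each $j$ and, on each $(z_{j-1},z_j)$, either $g'>0$ throughout or $g'\le0$ throughout. $f^+(z)$ and $f^-(z)$ are the right and left one-sided limits at $z$; $[f]_{z_j}=f^-(z_j)-f^+(z_j)$ for $1\le j\le N-1$; $\partial_{\mathrm{pw}}f=f'$ on each open subinterval; $\mathrm{Var}(f)=\sum_{\ell=1}^{N-1}|[f]_{z_\ell}|+\int_{-L}^L|\partial_{\mathrm{pw}}f(s)|\,ds$. *)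

theory Defs
  imports "HOL-Analysis.Analysis"
begin

definition C1_piece :: "real \<Rightarrow> real \<Rightarrow> (real \<Rightarrow> real) \<Rightarrow> bool" where
  "C1_piece a b f \<longleftrightarrow>
     (\<exists>g g'. (\<forall>x\<in>{a..b}. (g has_real_derivative g' x) (at x within {a..b}))
           \<and> continuous_on {a..b} g'
           \<and> (\<forall>x\<in>{a<..<b}. f x = g x))"

definition C1_pw :: "real \<Rightarrow> (real \<Rightarrow> real) \<Rightarrow> (nat \<Rightarrow> real) \<Rightarrow> nat \<Rightarrow> bool" where
  "C1_pw L f z N \<longleftrightarrow>
     z 0 = -L \<and> z N = L \<and> (\<forall>j<N. z j < z (Suc j))
     \<and> (\<forall>j\<in>{1..N}. C1_piece (z (j-1)) (z j) f
           \<and> ((\<forall>x\<in>{z (j-1)<..<z j}. deriv f x > 0)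
              \<or> (\<forall>x\<in>{z (j-1)<..<z j}. deriv f x \<le> 0)))"

definition fplus :: "(real \<Rightarrow> real) \<Rightarrow> real \<Rightarrow> real" where
  "fplus f x = Lim (at_right x) f"

definition fminus :: "(real \<Rightarrow> real) \<Rightarrow> real \<Rightarrow> real" where
  "fminus f x = Lim (at_left x) f"

definition jump :: "(real \<Rightarrow> real) \<Rightarrow> real \<Rightarrow> real" where
  "jump f x = fminus f x - fplus f x"

text \<open>Var(f) = sum of absolute jumps at interior break points plus the integral of
  the absolute piecewise derivative (which equals deriv f off the finitely many break points).\<close>
definition Var :: "real \<Rightarrow> (real \<Rightarrow> real) \<Rightarrow> (nat \<Rightarrow> real) \<Rightarrow> nat \<Rightarrow> real" where
  "Var L f z N = (\<Sum>l=1..N-1. \<bar>jump f (z l)\<bar>) + integral {-L..L} (\<lambda>s. \<bar>deriv f s\<bar>)"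

end

theory Submission
  imports Defs
begin

text \<open>Each factor is bounded via \<open>a/b \<le> 1 + \<bar>b - a\<bar>/f\<^sub>m\<^sub>i\<^sub>n \<le> exp (\<bar>b - a\<bar>/f\<^sub>m\<^sub>i\<^sub>n)\<close>,
  where \<open>a, b\<close> are the one-sided limits at a break point; these inherit the lower bound
  \<open>f\<^sub>m\<^sub>i\<^sub>n\<close> because each piece extends continuously to its closed interval. The product of
  the exponentials is the exponential of the total jump, which is at most \<open>Var(f)/f\<^sub>m\<^sub>i\<^sub>n\<close>.\<close>

lemma C1_piece_one_sided_limits:
  assumes "a < b" and "C1_piece a b f"
  obtains ya yb where "(f \<longlongrightarrow> ya) (at_right a)" and "(f \<longlongrightarrow> yb) (at_left b)"
proof -
  obtain g g' where deriv_g: "\<forall>x\<in>{a..b}. (g has_real_derivative g' x) (at x within {a..b})"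
    and f_eq_g: "\<forall>x\<in>{a<..<b}. f x = g x"
    using assms(2) unfolding C1_piece_def by blast
  have "continuous_on {a..b} g"
    unfolding continuous_on_eq_continuous_within
    using deriv_g has_field_derivative_imp_has_derivative has_derivative_continuous by blast
  then have "(g \<longlongrightarrow> g a) (at_right a)" "(g \<longlongrightarrow> g b) (at_left b)"
    using assms(1) at_within_Icc_at_right[OF assms(1)] at_within_Icc_at_left[OF assms(1)]
    by (metis atLeastAtMost_iff continuous_on_def less_eq_real_def order_refl)+
  moreover have "\<forall>\<^sub>F x in at_right a. f x = g x" "\<forall>\<^sub>F x in at_left b. f x = g x"
    using eventually_at_right_real[OF assms(1)] eventually_at_left_real[OF assms(1)] f_eq_g
    by (auto elim: eventually_mono)
  ultimately show thesis
    using that tendsto_cong by metis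
qed

lemma Lim_ge_if_eventually_ge:
  fixes f :: "real \<Rightarrow> real"
  assumes "(f \<longlongrightarrow> y) F" and "F \<noteq> bot" and "\<forall>\<^sub>F x in F. f x \<ge> m"
  shows "Lim F f \<ge> m"
  using assms tendsto_Lim tendsto_lowerbound by metis

lemma C1_piece_one_sided_limits_ge:
  assumes "a < b" and "C1_piece a b f" and "\<forall>x\<in>{a<..<b}. f x \<ge> m"
  shows "fplus f a \<ge> m" and "fminus f b \<ge> m"
proof -
  obtain ya yb where "(f \<longlongrightarrow> ya) (at_right a)" "(f \<longlongrightarrow> yb) (at_left b)"
    using C1_piece_one_sided_limits[OF assms(1,2)] .
  moreover have "\<forall>\<^sub>F x in at_right a. f x \<ge> m" "\<forall>\<^sub>F x in at_left b. f x \<ge> m"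
    using eventually_at_right_real[OF assms(1)] eventually_at_left_real[OF assms(1)] assms(3)
    by (auto elim: eventually_mono)
  ultimately show "fplus f a \<ge> m" "fminus f b \<ge> m"
    unfolding fplus_def fminus_def by (auto intro: Lim_ge_if_eventually_ge)
qed

lemma increasing_nodes_mono:
  fixes z :: "nat \<Rightarrow> real"
  assumes "\<forall>j<N. z j < z (Suc j)" and "i \<le> j" and "j \<le> N"
  shows "z i \<le> z j"
  using assms(2,3)
proof (induction j rule: dec_induct)
  case (step j)
  then show ?case using assms(1) by (metis Suc_le_lessD less_imp_le_nat order.trans order_less_imp_le)
qed simp

lemma C1_pw_one_sided_limits_ge:
  assumes "C1_pw L f z N" and "\<forall>x\<in>{-L..L}. f x \<ge> m" and "l \<in> {1..N-1}"
  shows "fplus f (z l) \<ge> m" and "fminus f (z l) \<ge> m"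
proof -
  have z0: "z 0 = -L" and zN: "z N = L" and incr: "\<forall>j<N. z j < z (Suc j)"
    and pieces: "\<forall>j\<in>{1..N}. C1_piece (z (j-1)) (z j) f"
    using assms(1) unfolding C1_pw_def by auto
  have ge_on_piece: "\<forall>x\<in>{z (j-1)<..<z j}. f x \<ge> m" if "j \<in> {1..N}" for j
    using that assms(2) z0 zN increasing_nodes_mono[OF incr, of 0 "j-1"]
      increasing_nodes_mono[OF incr, of j N]
    by fastforce
  have l: "l \<in> {1..N}" "Suc l \<in> {1..N}" and "l - 1 < N"
    using assms(3) by auto
  then have "z (l-1) < z l"
    using incr by (metis Suc_diff_1 atLeastAtMost_iff less_le_trans zero_less_one)
  then show "fminus f (z l) \<ge> m"
    using C1_piece_one_sided_limits_ge(2) pieces ge_on_piece l(1) by blast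
  have "C1_piece (z l) (z (Suc l)) f" using pieces l(2) by fastforce
  then show "fplus f (z l) \<ge> m"
    using C1_piece_one_sided_limits_ge(1) ge_on_piece[OF l(2)] incr \<open>l - 1 < N\<close> l(2)
    by (metis Suc_le_lessD atLeastAtMost_iff diff_Suc_1)
qed

lemma max_ratio_one_le_exp:
  fixes a b m :: real
  assumes "m > 0" "a \<ge> m" "b \<ge> m"
  shows "max (a / b) 1 \<le> exp (\<bar>b - a\<bar> / m)"
proof -
  have "a / b = 1 + (a - b) / b" using assms by (simp add: field_simps)
  also have "(a - b) / b \<le> \<bar>b - a\<bar> / b" using assms by (simp add: divide_right_mono)
  also have "\<bar>b - a\<bar> / b \<le> \<bar>b - a\<bar> / m" using assms by (simp add: frac_le)
  also have "1 + \<bar>b - a\<bar> / m \<le> exp (\<bar>b - a\<bar> / m)" by (metis add.commute exp_ge_add_one_self)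
  finally show ?thesis using assms by simp
qed

lemma prod_max_ratio_le_exp_sum:
  fixes a b :: "nat \<Rightarrow> real"
  assumes "m > 0" and "\<forall>l\<in>A. a l \<ge> m \<and> b l \<ge> m"
  shows "(\<Prod>l\<in>A. max (a l / b l) 1) \<le> exp ((\<Sum>l\<in>A. \<bar>b l - a l\<bar>) / m)"
proof -
  have "(\<Prod>l\<in>A. max (a l / b l) 1) \<le> (\<Prod>l\<in>A. exp (\<bar>b l - a l\<bar> / m))"
    using assms(2) max_ratio_one_le_exp[OF assms(1)] by (intro prod_mono conjI) auto
  also have "\<dots> \<le> exp ((\<Sum>l\<in>A. \<bar>b l - a l\<bar>) / m)"
    by (cases "finite A") (simp_all add: exp_sum sum_divide_distrib)
  finally show ?thesis .
qed

lemma jump_sum_le_Var: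
  "(\<Sum>l=1..N-1. \<bar>jump f (z l)\<bar>) \<le> Var L f z N"
proof -
  have "integral {-L..L} (\<lambda>s. \<bar>deriv f s\<bar>) \<ge> 0"
    by (cases "(\<lambda>s. \<bar>deriv f s\<bar>) integrable_on {-L..L}")
      (simp_all add: integral_nonneg not_integrable_integral)
  then show ?thesis unfolding Var_def by simp
qed

theorem lemma6p1:
  fixes L fmin :: real and f :: "real \<Rightarrow> real" and z :: "nat \<Rightarrow> real" and N :: nat
  assumes "L > 0"
    and "C1_pw L f z N"
    and "fmin > 0"
    and "\<forall>x\<in>{-L..L}. f x \<ge> fmin"
  shows "(\<Prod>l=1..N-1. max (fplus f (z l) / fminus f (z l)) 1) \<le> exp (Var L f z N / fmin)
       \<and> (\<Prod>l=1..N-1. max (fminus f (z l) / fplus f (z l)) 1) \<le> exp (Var L f z N / fmin)"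
proof -
  let ?jumps = "\<Sum>l=1..N-1. \<bar>jump f (z l)\<bar>"
  have limits_ge: "\<forall>l\<in>{1..N-1}. fplus f (z l) \<ge> fmin \<and> fminus f (z l) \<ge> fmin"
    using C1_pw_one_sided_limits_ge[OF assms(2,4)] by blast
  have "exp (?jumps / fmin) \<le> exp (Var L f z N / fmin)"
    using jump_sum_le_Var assms(3) by (simp add: divide_right_mono)
  moreover have "(\<Prod>l=1..N-1. max (fplus f (z l) / fminus f (z l)) 1) \<le> exp (?jumps / fmin)"
    using prod_max_ratio_le_exp_sum[OF assms(3) limits_ge] by (simp add: jump_def)
  moreover have "(\<Prod>l=1..N-1. max (fminus f (z l) / fplus f (z l)) 1) \<le> exp (?jumps / fmin)"
    using prod_max_ratio_le_exp_sum[OF assms(3)] limits_ge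
    by (simp add: jump_def abs_minus_commute)
  ultimately show ?thesis by linarith
qed

end
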